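(* Let $\hat P=\mathrm{Spec}(B)$ be an affine extension of a principal $\mathbb{G}_a$-bundle $P\to S_*$ with $\hat P\not\simeq S\times\mathbb{G}_a$. If $\mathrm{gr}_D(B)$ is generated as an $\mathcal O(S)$-algebra by its elements of degree $1$, then the exceptional fiber $E=\hat\pi^{-1}(\mathbf x)$ consists of $\mathbb{G}_a$-fixed points only.
   Context: All varieties are over $\mathbb{C}$. $S$ normal affine surface, $\mathbf{x}\in S$ a closed regular point, $S_*=S\setminus\{\mathbf{x}\}$. An affine extension of $\pi\colon P\to S_*$ is a normal affine $\mathbb{G}_a$-variety $\hat P=\mathrm{Spec}(B)$ with a morphism $\hat\pi\colon\hat P\to S$ and a $\mathbb{G}_a$-equivariant dominant open embedding $\iota\colon P\hookrightarrow\hat P$ with $\iota(P)=\hat\pi^{-1}(S_* )$ and $\hat\pi\circ\iota=\pi$. $D$ is the locally nilpotent derivation of $B$ corresponding to the $\mathbb{G}_a$-action, $\ker D=\mathcal O(S)$, and $\mathrm{gr}_D(B)=\bigoplus_{\nu\ge0}\ker D^{\nu+1}/\ker D^{\nu}$. *)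

theory Defs
  imports Complex_Main
begin

text \<open>Commutative algebra over the complex numbers, rendered inside a domain type 'b.
  The C-algebra structure of B is given by a ring homomorphism emb from complex into 'b.\<close>

definition C_alg_hom :: "(complex \<Rightarrow> 'b::idom) \<Rightarrow> bool" where
  "C_alg_hom emb \<longleftrightarrow> emb 1 = 1 \<and> (\<forall>x y. emb (x + y) = emb x + emb y)
                      \<and> (\<forall>x y. emb (x * y) = emb x * emb y)"

inductive_set gen_alg :: "(complex \<Rightarrow> 'b::idom) \<Rightarrow> 'b set \<Rightarrow> 'b set"
  for emb :: "complex \<Rightarrow> 'b" and G :: "'b set" where
  scal: "emb c \<in> gen_alg emb G"
| gen: "g \<in> G \<Longrightarrow> g \<in> gen_alg emb G"
| add: "x \<in> gen_alg emb G \<Longrightarrow> y \<in> gen_alg emb G \<Longrightarrow> x + y \<in> gen_alg emb G"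
| mult: "x \<in> gen_alg emb G \<Longrightarrow> y \<in> gen_alg emb G \<Longrightarrow> x * y \<in> gen_alg emb G"

definition affine_alg :: "(complex \<Rightarrow> 'b::idom) \<Rightarrow> 'b set \<Rightarrow> bool" where
  "affine_alg emb R \<longleftrightarrow> (\<exists>G. finite G \<and> G \<subseteq> R \<and> gen_alg emb G = R)"

definition is_ideal :: "'b::idom set \<Rightarrow> 'b set \<Rightarrow> bool" where
  "is_ideal R I \<longleftrightarrow> I \<subseteq> R \<and> 0 \<in> I \<and> (\<forall>x\<in>I. \<forall>y\<in>I. x + y \<in> I)
                    \<and> (\<forall>r\<in>R. \<forall>x\<in>I. r * x \<in> I)"

definition prime_ideal_in :: "'b::idom set \<Rightarrow> 'b set \<Rightarrow> bool" where
  "prime_ideal_in R P \<longleftrightarrow> is_ideal R P \<and> P \<noteq> R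
      \<and> (\<forall>a\<in>R. \<forall>b\<in>R. a * b \<in> P \<longrightarrow> a \<in> P \<or> b \<in> P)"

definition maximal_ideal_in :: "'b::idom set \<Rightarrow> 'b set \<Rightarrow> bool" where
  "maximal_ideal_in R M \<longleftrightarrow> is_ideal R M \<and> M \<noteq> R
      \<and> (\<forall>I. is_ideal R I \<and> M \<subseteq> I \<longrightarrow> I = M \<or> I = R)"

definition prime_chain :: "'b::idom set \<Rightarrow> nat \<Rightarrow> bool" where
  "prime_chain R n \<longleftrightarrow> (\<exists>P. (\<forall>i\<le>n. prime_ideal_in R (P i)) \<and> (\<forall>i<n. P i \<subset> P (Suc i)))"

definition krull_dim_eq :: "'b::idom set \<Rightarrow> nat \<Rightarrow> bool" where
  "krull_dim_eq R n \<longleftrightarrow> prime_chain R n \<and> \<not> prime_chain R (Suc n)"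

text \<open>R (a subdomain) is integrally closed in its fraction field: whenever a/b (a, b in R,
  b nonzero) satisfies a monic equation over R, b divides a in R.\<close>
definition integrally_closed :: "'b::idom set \<Rightarrow> bool" where
  "integrally_closed R \<longleftrightarrow> (\<forall>a\<in>R. \<forall>b\<in>R. b \<noteq> 0 \<longrightarrow>
      (\<exists>n::nat. \<exists>c::nat \<Rightarrow> 'b. (\<forall>i. c i \<in> R) \<and>
          a ^ n + (\<Sum>i<n. c i * a ^ i * b ^ (n - i)) = 0) \<longrightarrow>
      (\<exists>q\<in>R. a = q * b))"

definition lnd :: "(complex \<Rightarrow> 'b::idom) \<Rightarrow> ('b \<Rightarrow> 'b) \<Rightarrow> bool" where
  "lnd emb D \<longleftrightarrow> (\<forall>x y. D (x + y) = D x + D y) \<and> (\<forall>x y. D (x * y) = x * D y + y * D x)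
      \<and> (\<forall>c. D (emb c) = 0) \<and> (\<forall>x. \<exists>n. (D ^^ n) x = 0)"

definition kerD :: "('b::idom \<Rightarrow> 'b) \<Rightarrow> 'b set" where
  "kerD D = {b. D b = 0}"

definition ideal_sq :: "'b::idom set \<Rightarrow> 'b set" where
  "ideal_sq m = {(\<Sum>i<k. y i * z i) | (k::nat) (y::nat \<Rightarrow> 'b) (z::nat \<Rightarrow> 'b). \<forall>i<k. y i \<in> m \<and> z i \<in> m}"

text \<open>A closed point of a surface Spec R (all maximal ideals of height 2) is regular iff
  dim m/m^2 \<le> 2, i.e. m is generated by two elements modulo m^2.\<close>
definition regular_max_ideal :: "'b::idom set \<Rightarrow> 'b set \<Rightarrow> bool" where
  "regular_max_ideal R m \<longleftrightarrow> maximal_ideal_in R m \<and>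
     (\<exists>f\<in>m. \<exists>g\<in>m. \<forall>x\<in>m. \<exists>u\<in>R. \<exists>v\<in>R. x - (u * f + v * g) \<in> ideal_sq m)"

text \<open>The restriction of Spec B \<rightarrow> Spec(ker D) over S_* = S minus the point m is a principal
  G_a-bundle: every closed point of S_* has a neighbourhood D(a) over which the
  action is trivial, i.e. there is s with D s = a in ker D and a not in that point.\<close>
definition principal_bundle_off :: "('b::idom \<Rightarrow> 'b) \<Rightarrow> 'b set \<Rightarrow> bool" where
  "principal_bundle_off D m \<longleftrightarrow> (\<forall>n. maximal_ideal_in (kerD D) n \<and> n \<noteq> m \<longrightarrow>
      (\<exists>s. D s \<in> kerD D \<and> D s \<notin> n))"

text \<open>Spec B is equivariantly S \<times> G_a over S: B = (ker D)[s] with D s = 1.\<close>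
definition trivial_extension :: "(complex \<Rightarrow> 'b::idom) \<Rightarrow> ('b \<Rightarrow> 'b) \<Rightarrow> bool" where
  "trivial_extension emb D \<longleftrightarrow> (\<exists>s. D s = 1 \<and> gen_alg emb (kerD D \<union> {s}) = UNIV)"

text \<open>gr_D(B) = \<Oplus> ker D^(\<nu>+1)/ker D^\<nu> is generated as a ker D-algebra by its degree-1
  elements: each element of ker D^(\<nu>+1) is, modulo ker D^\<nu>, a ker D-linear
  combination of products of \<nu> elements of ker D^2.\<close>
definition gr_generated_deg1 :: "('b::idom \<Rightarrow> 'b) \<Rightarrow> bool" where
  "gr_generated_deg1 D \<longleftrightarrow> (\<forall>\<nu>::nat. \<forall>b. (D ^^ Suc \<nu>) b = 0 \<longrightarrow>
     (\<exists>k::nat. \<exists>a::nat \<Rightarrow> 'b. \<exists>f::nat \<Rightarrow> nat \<Rightarrow> 'b.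
        (\<forall>j<k. D (a j) = 0 \<and> (\<forall>i<\<nu>. (D ^^ 2) (f j i) = 0)) \<and>
        (D ^^ \<nu>) (b - (\<Sum>j<k. a j * (\<Prod>i<\<nu>. f j i))) = 0))"

end

theory Submission
  imports Defs
begin

(* A slice s (with D s = 1) would give B = O(S)[s], i.e. a trivial extension; so the plinth
   ideal D(ker D^2) of O(S) does not contain 1. Because the bundle is principal off x, no
   maximal ideal of O(S) other than m contains the plinth ideal, hence it lies in m.
   If gr_D(B) is generated in degree 1, every element of ker D^(n+1) is, modulo ker D^n,
   an O(S)-combination of products of elements of ker D^2, and by the Leibniz rule D maps
   such a combination into the ideal generated by the plinth ideal. Induction on n shows that
   D(B) lies in every maximal ideal of B over m, i.e. D vanishes along the exceptional fibre. *)

lemma C_alg_hom_0: "C_alg_hom emb \<Longrightarrow> emb 0 = 0"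
  unfolding C_alg_hom_def by (metis add_0 add_cancel_right_right)

lemma C_alg_hom_of_nat: "C_alg_hom emb \<Longrightarrow> emb (of_nat k) = of_nat k"
  by (induction k) (simp_all add: C_alg_hom_0, simp add: C_alg_hom_def)

lemma C_alg_hom_inverse_mult:
  assumes "C_alg_hom emb" "c \<noteq> 0"
  shows "emb (inverse c) * emb c = 1"
  using assms by (metis C_alg_hom_def left_inverse)

lemma gen_alg_power:
  assumes "C_alg_hom emb" "x \<in> gen_alg emb G"
  shows "x ^ k \<in> gen_alg emb G"
proof (induction k)
  case 0
  show ?case using gen_alg.scal[of emb 1 G] assms(1) by (simp add: C_alg_hom_def)
next
  case (Suc k)
  then show ?case using gen_alg.mult[OF assms(2)] by simp
qed

lemma is_ideal_eq_if_one_mem: "is_ideal R J \<Longrightarrow> 1 \<in> J \<Longrightarrow> J = R"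
  unfolding is_ideal_def by (metis mult.right_neutral subsetI subset_antisym)

lemma is_ideal_Union_chain:
  assumes "C \<noteq> {}" "subset.chain {J. is_ideal R J} C"
  shows "is_ideal R (\<Union>C)"
  unfolding is_ideal_def
proof (intro conjI ballI)
  have ideals: "\<And>J. J \<in> C \<Longrightarrow> is_ideal R J"
    and comparable: "\<And>X Y. X \<in> C \<Longrightarrow> Y \<in> C \<Longrightarrow> X \<subseteq> Y \<or> Y \<subseteq> X"
    using assms(2) by (auto simp: subset_chain_def)
  show "\<Union>C \<subseteq> R" using ideals unfolding is_ideal_def by blast
  show "0 \<in> \<Union>C" using ideals assms(1) by (auto simp: is_ideal_def)
  show "x + y \<in> \<Union>C" if x: "x \<in> \<Union>C" and y: "y \<in> \<Union>C" for x y
  proof -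
    obtain X Y where XY: "X \<in> C" "Y \<in> C" "x \<in> X" "y \<in> Y" using x y by blast
    then consider "x \<in> Y" | "y \<in> X" using comparable by blast
    then show ?thesis using XY ideals unfolding is_ideal_def by cases blast+
  qed
  show "r * x \<in> \<Union>C" if "r \<in> R" "x \<in> \<Union>C" for r x
    using that ideals unfolding is_ideal_def by blast
qed

lemma exists_maximal_ideal_superset:
  assumes "is_ideal R I" "1 \<notin> I" "1 \<in> R"
  shows "\<exists>M. maximal_ideal_in R M \<and> I \<subseteq> M"
proof -
  define A where "A = {J. is_ideal R J \<and> I \<subseteq> J \<and> 1 \<notin> J}"
  have "\<exists>M\<in>A. \<forall>X\<in>A. M \<subseteq> X \<longrightarrow> X = M"
  proof (rule subset_Zorn_nonempty)
    show "A \<noteq> {}" using assms unfolding A_def by blast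
    show "\<Union>C \<in> A" if "C \<noteq> {}" "subset.chain A C" for C
    proof -
      have "subset.chain {J. is_ideal R J} C"
        using that(2) unfolding A_def subset_chain_def by blast
      with that(1) have "is_ideal R (\<Union>C)" by (rule is_ideal_Union_chain)
      then show ?thesis using that unfolding A_def subset_chain_def by blast
    qed
  qed
  then obtain M where M: "M \<in> A" and M_max: "\<forall>X\<in>A. M \<subseteq> X \<longrightarrow> X = M" by blast
  have "maximal_ideal_in R M"
    unfolding maximal_ideal_in_def
  proof (intro conjI allI impI)
    show "is_ideal R M" "M \<noteq> R" using M \<open>1 \<in> R\<close> by (auto simp: A_def)
    show "J = M \<or> J = R" if "is_ideal R J \<and> M \<subseteq> J" for J
      using that M M_max is_ideal_eq_if_one_mem unfolding A_def by blast
  qed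
  then show ?thesis using M unfolding A_def by blast
qed

locale locally_nilpotent_derivation =
  fixes emb :: "complex \<Rightarrow> 'b::idom" and D :: "'b \<Rightarrow> 'b"
  assumes lnd: "lnd emb D"
begin

lemma D_add: "D (x + y) = D x + D y"
  using lnd by (simp add: lnd_def)

lemma D_mult: "D (x * y) = x * D y + y * D x"
  using lnd by (simp add: lnd_def)

lemma D_emb: "D (emb c) = 0"
  using lnd by (simp add: lnd_def)

lemma locally_nilpotent: "\<exists>n. (D ^^ n) x = 0"
  using lnd by (simp add: lnd_def)

lemma D_0: "D 0 = 0"
  using D_add[of 0 0] by (metis add_0 add_cancel_right_right)

lemma D_1: "D 1 = 0"
  using D_mult[of 1 1] by (metis mult_1 add_cancel_right_right)

lemma D_diff: "D (x - y) = D x - D y"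
  using D_add[of "x - y" y] by (simp add: algebra_simps)

lemma D_of_nat: "D (of_nat k) = 0"
  by (induction k) (simp_all add: D_0 D_1 D_add)

lemma funpow_D_diff: "(D ^^ n) (x - y) = (D ^^ n) x - (D ^^ n) y"
  by (induction n) (simp_all add: D_diff)

lemma funpow_D_mult_kernel: "D c = 0 \<Longrightarrow> (D ^^ n) (c * x) = c * (D ^^ n) x"
  by (induction n) (simp_all add: D_mult)

lemma D_power_slice: "D s = 1 \<Longrightarrow> D (s ^ Suc n) = of_nat (Suc n) * s ^ n"
  by (induction n) (simp_all add: D_mult algebra_simps)

lemma funpow_D_power_slice: "D s = 1 \<Longrightarrow> (D ^^ n) (s ^ n) = of_nat (fact n)"
proof (induction n)
  case (Suc n)
  have "(D ^^ Suc n) (s ^ Suc n) = (D ^^ n) (of_nat (Suc n) * s ^ n)"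
    using D_power_slice[OF Suc.prems] by (simp only: funpow_Suc_right comp_def)
  also have "\<dots> = of_nat (Suc n) * of_nat (fact n)"
    using Suc by (simp add: funpow_D_mult_kernel[OF D_of_nat] del: of_nat_Suc)
  finally show ?case by (simp only: fact_Suc of_nat_mult of_nat_id id_apply)
qed simp

lemma mem_slice_alg_if_funpow_zero:
  assumes hom: "C_alg_hom emb" and s: "D s = 1"
  shows "(D ^^ n) b = 0 \<Longrightarrow> b \<in> gen_alg emb (kerD D \<union> {s})"
proof (induction n arbitrary: b)
  case 0
  then show ?case using gen_alg.scal[of emb 0] by (simp add: C_alg_hom_0[OF hom])
next
  case (Suc n)
  let ?G = "gen_alg emb (kerD D \<union> {s})"
  define c :: complex where "c = of_nat (fact n)"
  define e where "e = emb (inverse c) * (D ^^ n) b"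
  have De: "D e = 0"
    using Suc.prems by (simp add: e_def D_mult D_emb)
  \<comment> \<open>e is the leading coefficient of b in s, so subtracting e s^n lowers the degree\<close>
  have "(D ^^ n) (b - e * s ^ n) = (D ^^ n) b - e * emb c"
    by (simp add: c_def C_alg_hom_of_nat[OF hom] funpow_D_diff funpow_D_mult_kernel[OF De]
        funpow_D_power_slice[OF s] del: of_nat_fact)
  also have "e * emb c = (D ^^ n) b * (emb (inverse c) * emb c)"
    by (simp add: e_def ac_simps)
  also have "\<dots> = (D ^^ n) b"
    by (simp add: c_def C_alg_hom_inverse_mult[OF hom] del: of_nat_fact)
  finally have "b - e * s ^ n \<in> ?G" by (intro Suc.IH) simp
  moreover have "e * s ^ n \<in> ?G"
    using De by (intro gen_alg.mult gen_alg_power[OF hom] gen_alg.gen) (auto simp: kerD_def)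
  ultimately have "(b - e * s ^ n) + e * s ^ n \<in> ?G" by (rule gen_alg.add)
  then show ?case by simp
qed

lemma trivial_extension_if_slice:
  assumes "C_alg_hom emb" "D s = 1"
  shows "trivial_extension emb D"
  unfolding trivial_extension_def
  using assms locally_nilpotent mem_slice_alg_if_funpow_zero by blast

definition plinth_ideal :: "'b set" where
  "plinth_ideal = D ` {s. D (D s) = 0}"

lemma is_ideal_plinth_ideal: "is_ideal (kerD D) plinth_ideal"
  unfolding is_ideal_def
proof (intro conjI ballI)
  show "plinth_ideal \<subseteq> kerD D" "0 \<in> plinth_ideal"
    using D_0 by (auto simp: plinth_ideal_def kerD_def)
  show "x + y \<in> plinth_ideal" if x: "x \<in> plinth_ideal" and y: "y \<in> plinth_ideal" for x y
  proof -
    obtain a b where "x = D a" "D (D a) = 0" "y = D b" "D (D b) = 0"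
      using x y by (auto simp: plinth_ideal_def)
    then have "x + y = D (a + b)" "D (D (a + b)) = 0" by (simp_all add: D_add)
    then show ?thesis by (auto simp: plinth_ideal_def)
  qed
  show "r * x \<in> plinth_ideal" if r: "r \<in> kerD D" and x: "x \<in> plinth_ideal" for r x
  proof -
    obtain a where "x = D a" "D (D a) = 0" "D r = 0"
      using r x by (auto simp: plinth_ideal_def kerD_def)
    then have "r * x = D (r * a)" "D (D (r * a)) = 0" by (simp_all add: D_mult D_0)
    then show ?thesis by (auto simp: plinth_ideal_def)
  qed
qed

lemma one_mem_plinth_ideal_iff: "1 \<in> plinth_ideal \<longleftrightarrow> (\<exists>s. D s = 1)"
  by (auto simp: plinth_ideal_def D_1)

lemma plinth_ideal_subset_if_principal_bundle_off:
  assumes "principal_bundle_off D m" "\<nexists>s. D s = 1"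
  shows "plinth_ideal \<subseteq> m"
proof -
  obtain M where M: "maximal_ideal_in (kerD D) M" "plinth_ideal \<subseteq> M"
    using exists_maximal_ideal_superset[OF is_ideal_plinth_ideal] assms(2) D_1
    by (auto simp: one_mem_plinth_ideal_iff kerD_def)
  have "M = m"
  proof (rule ccontr)
    assume "M \<noteq> m"
    then obtain s where "D s \<in> kerD D" "D s \<notin> M"
      using assms(1) M(1) unfolding principal_bundle_off_def by blast
    then show False using M(2) by (auto simp: plinth_ideal_def kerD_def)
  qed
  then show ?thesis using M(2) by simp
qed

context
  fixes q :: "'b set"
  assumes q: "is_ideal UNIV q"
begin

lemma ideal_add: "x \<in> q \<Longrightarrow> y \<in> q \<Longrightarrow> x + y \<in> q"
  and ideal_mult: "x \<in> q \<Longrightarrow> r * x \<in> q"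
  and ideal_0: "0 \<in> q"
  using q unfolding is_ideal_def by blast+

lemma D_prod_mem_ideal: "(\<And>i. i < n \<Longrightarrow> D (f i) \<in> q) \<Longrightarrow> D (\<Prod>i<(n::nat). f i) \<in> q"
  by (induction n) (simp_all add: D_1 D_mult ideal_0 ideal_add ideal_mult)

lemma D_sum_mem_ideal:
  "(\<And>j. j < k \<Longrightarrow> D (a j) = 0 \<and> D (p j) \<in> q) \<Longrightarrow> D (\<Sum>j<(k::nat). a j * p j) \<in> q"
  by (induction k) (simp_all add: D_0 D_add D_mult ideal_0 ideal_add ideal_mult)

lemma funpow_zero_imp_D_mem_ideal:
  assumes gr: "gr_generated_deg1 D" and plinth: "plinth_ideal \<subseteq> q"
  shows "(D ^^ n) b = 0 \<Longrightarrow> D b \<in> q"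
proof (induction n arbitrary: b)
  case 0
  then show ?case by (simp add: D_0 ideal_0)
next
  case (Suc n)
  obtain k :: nat and a f where
    coeffs: "\<forall>j<k. D (a j) = 0 \<and> (\<forall>i<n. (D ^^ 2) (f j i) = 0)" and
    rest: "(D ^^ n) (b - (\<Sum>j<k. a j * (\<Prod>i<n. f j i))) = 0"
    using gr[unfolded gr_generated_deg1_def, rule_format, OF Suc.prems] by blast
  let ?c = "\<Sum>j<k. a j * (\<Prod>i<n. f j i)"
  have "D (f j i) \<in> q" if "j < k" "i < n" for j i
    using coeffs that plinth by (auto simp: plinth_ideal_def numeral_2_eq_2)
  then have "D ?c \<in> q"
    using coeffs by (intro D_sum_mem_ideal conjI D_prod_mem_ideal) auto
  have "D (b - ?c) \<in> q" using rest by (rule Suc.IH)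
  then have "D (b - ?c) + D ?c \<in> q" using \<open>D ?c \<in> q\<close> by (rule ideal_add)
  then show ?case by (simp add: D_diff)
qed

lemma range_D_subset_ideal:
  assumes "gr_generated_deg1 D" "plinth_ideal \<subseteq> q"
  shows "range D \<subseteq> q"
  using funpow_zero_imp_D_mem_ideal[OF assms] locally_nilpotent by blast

end

end

theorem mainTheorem12:
  fixes emb :: "complex \<Rightarrow> 'b::idom" and D :: "'b \<Rightarrow> 'b" and m :: "'b set"
  assumes "C_alg_hom emb"
    and "affine_alg emb UNIV" and "integrally_closed (UNIV :: 'b set)"
    and "lnd emb D"
    and "affine_alg emb (kerD D)" and "integrally_closed (kerD D)"
    and "krull_dim_eq (kerD D) 2"
    and "regular_max_ideal (kerD D) m"
    and "principal_bundle_off D m"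
    and "\<not> trivial_extension emb D"
    and "gr_generated_deg1 D"
  shows "\<forall>q. maximal_ideal_in UNIV q \<and> m \<subseteq> q \<longrightarrow> range D \<subseteq> q"
proof (intro allI impI)
  interpret locally_nilpotent_derivation emb D using assms(4) by unfold_locales
  fix q assume q: "maximal_ideal_in UNIV q \<and> m \<subseteq> q"
  have no_slice: "\<nexists>s. D s = 1" using assms(1,10) trivial_extension_if_slice by blast
  have "plinth_ideal \<subseteq> m"
    using assms(9) no_slice by (rule plinth_ideal_subset_if_principal_bundle_off)
  with q show "range D \<subseteq> q"
    by (intro range_D_subset_ideal assms(11)) (auto simp: maximal_ideal_in_def)
qed

end
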